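(* Let $p=4k+1$ be a prime, let $J(k)=\sum_{i=1}^{4k-2}\big(\frac{i(i+1)(i+2)}{p}\big)$ and $d(k)=\frac{J(k)^2-4}{32}$, and let $S\subset\mathbb{P}^5$ be the surface over $\mathbb{F}_p$ defined by $x_1^2-x_2^2=x_3^2$, $x_0^2-x_1^2=x_4^2$, $x_0^2-x_2^2=x_5^2$. Then $$n_p(K_4)=\frac{k(k-1)(k-4)+2k\,d(k)}{24}\quad\text{if and only if}\quad |S(\mathbb{F}_p)|=(p+1)^2+J(k)^2 .$$
   Context: $\big(\frac{a}{p}\big)$ is the Legendre symbol. $n_p(K_4)$ is the number of $4$-tuples $(r_1,r_2,r_3,r_4)$ of pairwise distinct residues modulo $p$ such that all differences $r_i-r_j$ ($i\neq j$) are nonzero quadratic residues mod $p$, where tuples differing by a permutation of entries or by adding the same residue to all entries are identified. *)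

theory Defs
  imports "HOL-Number_Theory.Number_Theory" "HOL-Library.FuncSet"
begin

text \<open>Residues mod p are represented by the integers 0..p-1.\<close>

definition K4_sets :: "nat \<Rightarrow> int set set" where
  "K4_sets p = {A. A \<subseteq> {0..<int p} \<and> card A = 4 \<and>
     (\<forall>x\<in>A. \<forall>y\<in>A. x \<noteq> y \<longrightarrow> Legendre (x - y) (int p) = 1)}"

definition transl_rel :: "nat \<Rightarrow> (int set \<times> int set) set" where
  "transl_rel p = {(A, B). A \<in> K4_sets p \<and> B \<in> K4_sets p \<and>
     (\<exists>t::int. B = (\<lambda>x. (x + t) mod int p) ` A)}"

text \<open>Number of 4-cliques of the Paley graph up to permutation and translation.\<close>
definition n_K4 :: "nat \<Rightarrow> nat" where
  "n_K4 p = card (K4_sets p // transl_rel p)"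

definition J :: "nat \<Rightarrow> nat \<Rightarrow> int" where
  "J p k = (\<Sum>i = 1..4*k-2. Legendre (int i * (int i + 1) * (int i + 2)) (int p))"

definition d :: "nat \<Rightarrow> nat \<Rightarrow> rat" where
  "d p k = (of_int (J p k ^ 2) - 4) / 32"

definition S_vecs :: "nat \<Rightarrow> (nat \<Rightarrow> int) set" where
  "S_vecs p = {x \<in> PiE {0..5} (\<lambda>_. {0..<int p}). (\<exists>i\<in>{0..5}. x i \<noteq> 0) \<and>
     [x 1 ^ 2 - x 2 ^ 2 = x 3 ^ 2] (mod int p) \<and>
     [x 0 ^ 2 - x 1 ^ 2 = x 4 ^ 2] (mod int p) \<and>
     [x 0 ^ 2 - x 2 ^ 2 = x 5 ^ 2] (mod int p)}"

definition proj_rel :: "nat \<Rightarrow> ((nat \<Rightarrow> int) \<times> (nat \<Rightarrow> int)) set" where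
  "proj_rel p = {(x, y). x \<in> S_vecs p \<and> y \<in> S_vecs p \<and>
     (\<exists>c::int. \<not> int p dvd c \<and> y = (\<lambda>i\<in>{0..5}. (c * x i) mod int p))}"

definition card_S :: "nat \<Rightarrow> nat" where
  "card_S p = card (S_vecs p // proj_rel p)"

end

theory Submission
  imports Defs
begin

(* Both n_p(K_4) and |S(F_p)| are affine-linear in the number T of ordered triples (u, v, w) of
   nonzero squares mod p whose differences are nonzero squares as well, i.e. of 4-cliques
   {0, u, v, w} of the Paley graph; translating and ordering cliques gives 24 n_p(K_4) = T.
   On S the coordinates x_3, x_4, x_5 are square roots of differences of x_0^2, x_1^2, x_2^2, so
   the affine cone over S has as many points as the sum over u, v, w mod p of the product of nsqrt
   over u, v, w, u - v, u - w, v - w, where nsqrt t = 1 + (t/p) counts square roots. A term is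
   nonzero only if any two of 0, u, v, w are equal or adjacent, and evaluating the degenerate terms
   with #{w : w and 1 - w nonzero squares} = k - 1, a Jacobi sum, gives
   (p - 1) |S(F_p)| = 64 T + 384 k^2 - 224 k.
   Eliminating T turns each formula into the other. *)

lemma card_quotient_uniform:
  assumes "equiv A r" and "finite A" and "\<And>x. x \<in> A \<Longrightarrow> card (r `` {x}) = m"
  shows "m * card (A // r) = card A"
proof -
  have "m * card (A // r) = card (\<Union> (A // r))"
  proof (rule card_partition)
    show "finite (A // r)"
      using assms(2) equiv_type[OF assms(1)] by (rule finite_quotient)
    show "finite (\<Union> (A // r))"
      using assms(2) Union_quotient[OF assms(1)] by simp
    show "\<And>c. c \<in> A // r \<Longrightarrow> card c = m"
      using assms(3) by (auto elim: quotientE)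
    show "\<And>c1 c2. c1 \<in> A // r \<Longrightarrow> c2 \<in> A // r \<Longrightarrow> c1 \<noteq> c2 \<Longrightarrow> c1 \<inter> c2 = {}"
      using quotient_disj[OF assms(1)] by blast
  qed
  then show ?thesis
    using Union_quotient[OF assms(1)] by simp
qed

lemma cong_scale_squares:
  fixes a b e c m :: int
  assumes "[a^2 - b^2 = e^2] (mod m)"
  shows "[(c * a mod m)^2 - (c * b mod m)^2 = (c * e mod m)^2] (mod m)"
proof -
  have square_mod: "[(c * z mod m)^2 = c^2 * z^2] (mod m)" for z
    by (simp add: cong_def power_mod power_mult_distrib)
  have "[(c * a mod m)^2 - (c * b mod m)^2 = c^2 * (a^2 - b^2)] (mod m)"
    using cong_diff[OF square_mod square_mod] by (simp add: right_diff_distrib)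
  also have "[c^2 * (a^2 - b^2) = c^2 * e^2] (mod m)"
    by (rule cong_scalar_left[OF assms])
  also have "[c^2 * e^2 = (c * e mod m)^2] (mod m)"
    by (rule cong_sym[OF square_mod])
  finally show ?thesis .
qed

section \<open>Square roots modulo an odd prime\<close>

locale odd_prime =
  fixes p :: nat
  assumes prime_p: "prime p" and p_gt_2: "2 < p"
begin

abbreviation Zp :: "int set" where "Zp \<equiv> {0..<int p}"

lemma prime_int_p: "prime (int p)"
  using prime_p by simp

lemma odd_p: "odd p"
  using prime_odd_nat[OF prime_p p_gt_2] .

lemma cong_Zp_iff: "x \<in> Zp \<Longrightarrow> y \<in> Zp \<Longrightarrow> [x = y] (mod int p) \<longleftrightarrow> x = y"
  by (auto intro: cong_less_imp_eq_int)

lemma dvd_diff_Zp_iff: "x \<in> Zp \<Longrightarrow> y \<in> Zp \<Longrightarrow> int p dvd x - y \<longleftrightarrow> x = y"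
  using cong_Zp_iff by (simp add: cong_iff_dvd_diff)

lemma not_dvd_Zp: "x \<in> Zp \<Longrightarrow> x \<noteq> 0 \<Longrightarrow> \<not> int p dvd x"
  using dvd_diff_Zp_iff[of x 0] p_gt_2 by simp

lemma not_dvd_mult: "\<not> int p dvd a \<Longrightarrow> \<not> int p dvd b \<Longrightarrow> \<not> int p dvd a * b"
  using prime_int_p by (simp add: prime_dvd_mult_iff)

lemma not_dvd_1: "\<not> int p dvd 1" and not_dvd_2: "\<not> int p dvd 2"
  using p_gt_2 by (auto dest: zdvd_imp_le)

lemma sign_cong_imp_eq:
  assumes "a \<in> {-1, 0, 1}" and "b \<in> {-1, 0, 1}" and "[a = b] (mod int p)"
  shows "a = b"
  using assms not_dvd_1 not_dvd_2 by (auto simp: cong_iff_dvd_diff)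

lemma Legendre_range: "Legendre a (int p) \<in> {-1, 0, 1}"
  unfolding Legendre_def by auto

lemma Legendre_eq_0_iff: "Legendre a (int p) = 0 \<longleftrightarrow> int p dvd a"
  by (simp add: Legendre_def cong_0_iff)

lemma Legendre_cong:
  assumes "[a = b] (mod int p)"
  shows "Legendre a (int p) = Legendre b (int p)"
proof -
  have "QuadRes (int p) a = QuadRes (int p) b" and "[a = 0] (mod int p) = [b = 0] (mod int p)"
    unfolding QuadRes_def using assms cong_trans cong_sym by meson+
  then show ?thesis
    unfolding Legendre_def by simp
qed

lemma Legendre_mod: "Legendre (a mod int p) (int p) = Legendre a (int p)"
  by (rule Legendre_cong) simp

lemma Legendre_euler: "[Legendre a (int p) = a ^ ((p - 1) div 2)] (mod int p)"
  using euler_criterion[OF prime_p p_gt_2] .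

lemma Legendre_mult: "Legendre (a * b) (int p) = Legendre a (int p) * Legendre b (int p)"
proof (rule sign_cong_imp_eq)
  show "Legendre (a * b) (int p) \<in> {-1, 0, 1}" by (rule Legendre_range)
  show "Legendre a (int p) * Legendre b (int p) \<in> {-1, 0, 1}"
    using Legendre_range[of a] Legendre_range[of b] by auto
  have "[Legendre a (int p) * Legendre b (int p) = a ^ ((p - 1) div 2) * b ^ ((p - 1) div 2)] (mod int p)"
    by (intro cong_mult Legendre_euler)
  then show "[Legendre (a * b) (int p) = Legendre a (int p) * Legendre b (int p)] (mod int p)"
    using Legendre_euler[of "a * b"] by (metis cong_sym cong_trans power_mult_distrib)
qed

lemma Legendre_square_mult:
  assumes "\<not> int p dvd a"
  shows "Legendre (a^2 * b) (int p) = Legendre b (int p)"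
proof -
  have "Legendre a (int p) \<in> {-1, 1}"
    using Legendre_range[of a] assms Legendre_eq_0_iff by auto
  then show ?thesis
    by (auto simp: Legendre_mult power2_eq_square)
qed

definition sqrts :: "int \<Rightarrow> int set" where
  "sqrts t = {y \<in> Zp. [y^2 = t] (mod int p)}"

definition nsqrt :: "int \<Rightarrow> int" where
  "nsqrt t = int (card (sqrts t))"

lemma finite_sqrts: "finite (sqrts t)"
  unfolding sqrts_def by (rule finite_subset[of _ Zp]) auto

lemma sqrts_of_square:
  assumes "a \<in> Zp" and "a \<noteq> 0"
  shows "sqrts (a^2) = {a, int p - a}"
proof -
  have "[y^2 = a^2] (mod int p) \<longleftrightarrow> y = a \<or> y = int p - a" if "y \<in> Zp" for y
  proof -
    have "[y^2 = a^2] (mod int p) \<longleftrightarrow> int p dvd (y - a) * (y + a)"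
      by (simp add: cong_iff_dvd_diff power2_eq_square algebra_simps)
    moreover have "int p dvd y + a \<longleftrightarrow> int p dvd y - (int p - a)"
      using dvd_add_right_iff[of "int p" "int p" "y - (int p - a)"] by simp
    ultimately have "[y^2 = a^2] (mod int p) \<longleftrightarrow> int p dvd y - a \<or> int p dvd y - (int p - a)"
      using prime_int_p by (simp add: prime_dvd_mult_iff)
    then show ?thesis
      using that assms by (simp add: dvd_diff_Zp_iff)
  qed
  then show ?thesis
    using assms by (auto simp: sqrts_def)
qed

lemma nsqrt_cong: "[s = t] (mod int p) \<Longrightarrow> nsqrt s = nsqrt t"
  unfolding nsqrt_def sqrts_def by (metis (no_types, lifting) cong_sym cong_trans)

lemma sqrts_of_multiple:
  assumes "int p dvd t"
  shows "sqrts t = {0}"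
proof -
  have "y = 0" if "y \<in> Zp" and "[y^2 = t] (mod int p)" for y
  proof -
    have "int p dvd y^2"
      using assms that(2) by (simp add: cong_dvd_iff)
    then have "int p dvd y"
      using prime_int_p prime_dvd_power by blast
    then show ?thesis
      using that(1) not_dvd_Zp by blast
  qed
  moreover have "[0^2 = t] (mod int p)"
    using assms cong_0_iff cong_sym by (metis zero_power2)
  ultimately show ?thesis
    using p_gt_2 by (auto simp: sqrts_def)
qed

lemma nsqrt_Legendre: "nsqrt t = 1 + Legendre t (int p)"
proof (cases "int p dvd t")
  case True
  then show ?thesis
    by (simp add: nsqrt_def sqrts_of_multiple Legendre_eq_0_iff)
next
  case False
  show ?thesis
  proof (cases "QuadRes (int p) t")
    case True
    then obtain y where y: "[y^2 = t] (mod int p)"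
      by (auto simp: QuadRes_def)
    define a where "a = y mod int p"
    have a_sq: "[a^2 = t] (mod int p)"
      using y by (simp add: a_def cong_def power_mod)
    then have "a \<noteq> 0"
      using False cong_0_iff cong_sym by fastforce
    moreover have "a \<in> Zp"
      using p_gt_2 by (simp add: a_def)
    moreover have "a \<noteq> int p - a"
      using odd_p by presburger
    ultimately have "card (sqrts (a^2)) = 2"
      by (simp add: sqrts_of_square)
    then have "nsqrt t = 2"
      using nsqrt_cong[OF a_sq] by (simp add: nsqrt_def)
    then show ?thesis
      using True False by (simp add: Legendre_def cong_0_iff)
  next
    case nonres: False
    then have "sqrts t = {}"
      by (auto simp: QuadRes_def sqrts_def)
    then have "nsqrt t = 0"
      unfolding nsqrt_def by (metis card.empty of_nat_0)
    then show ?thesis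
      using nonres False by (simp add: Legendre_def cong_0_iff)
  qed
qed

lemma nsqrt_eq_1: "int p dvd t \<Longrightarrow> nsqrt t = 1"
  by (simp add: nsqrt_Legendre Legendre_eq_0_iff)

definition qres :: "int \<Rightarrow> bool" where
  "qres t \<longleftrightarrow> Legendre t (int p) = 1"

lemma qres_cong: "[s = t] (mod int p) \<Longrightarrow> qres s = qres t"
  by (simp add: qres_def Legendre_cong)

lemma qres_mod: "qres (t mod int p) = qres t"
  by (simp add: qres_def Legendre_mod)

lemma qres_not_dvd: "qres t \<Longrightarrow> \<not> int p dvd t"
  by (auto simp: qres_def Legendre_eq_0_iff[symmetric])

lemma not_qres_0: "\<not> qres 0"
  using qres_not_dvd by blast

lemma Legendre_one: "Legendre 1 (int p) = 1"
proof -
  have "QuadRes (int p) 1"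
    unfolding QuadRes_def by (rule exI[of _ 1]) simp
  then show ?thesis
    using not_dvd_1 by (simp add: Legendre_def cong_0_iff)
qed

lemma qres_mult_iff: "qres a \<Longrightarrow> qres (a * b) = qres b"
  by (simp add: qres_def Legendre_mult)

lemma nsqrt_not_dvd: "\<not> int p dvd t \<Longrightarrow> nsqrt t = (if qres t then 2 else 0)"
  using Legendre_range[of t] by (auto simp: nsqrt_Legendre qres_def Legendre_eq_0_iff)

lemma nsqrt_qres: "qres t \<Longrightarrow> nsqrt t = 2"
  by (simp add: nsqrt_not_dvd qres_not_dvd)

lemma not_dvd_diff_Zp: "x \<in> Zp \<Longrightarrow> y \<in> Zp \<Longrightarrow> x \<noteq> y \<Longrightarrow> \<not> int p dvd x - y"
  by (simp add: dvd_diff_Zp_iff)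

lemma sum_Zp_split:
  fixes f g :: "int \<Rightarrow> int"
  assumes "E \<subseteq> Zp"
    and "\<And>w. w \<in> Zp - E \<Longrightarrow> f w = of_bool (P w) * g w"
    and "\<And>w. w \<in> E \<Longrightarrow> \<not> P w"
  shows "(\<Sum>w\<in>Zp. f w) = (\<Sum>w\<in>E. f w) + (\<Sum>w\<in>{w \<in> Zp. P w}. g w)"
proof -
  have "(\<Sum>w\<in>Zp. f w) = (\<Sum>w\<in>Zp - E. of_bool (P w) * g w) + (\<Sum>w\<in>E. f w)"
    using assms(1,2) by (simp add: sum.subset_diff[of E Zp])
  also have "(\<Sum>w\<in>Zp - E. of_bool (P w) * g w) = (\<Sum>w\<in>(Zp - E) \<inter> {w. P w}. g w)"
    by (simp add: finite_subset[of _ Zp])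
  also have "(Zp - E) \<inter> {w. P w} = {w \<in> Zp. P w}"
    using assms(3) by auto
  finally show ?thesis
    by (simp add: add.commute)
qed

lemma sum_square_fibres: "(\<Sum>y\<in>Zp. F (y^2 mod int p)) = (\<Sum>u\<in>Zp. nsqrt u * F u)"
proof -
  have "(\<Sum>y\<in>Zp. F (y^2 mod int p)) = (\<Sum>u\<in>Zp. \<Sum>y\<in>{y \<in> Zp. y^2 mod int p = u}. F (y^2 mod int p))"
    using p_gt_2 by (intro sum.group[symmetric]) auto
  also have "\<dots> = (\<Sum>u\<in>Zp. \<Sum>y\<in>{y \<in> Zp. [y^2 = u] (mod int p)}. F u)"
    by (intro sum.cong refl) (auto simp: cong_def)
  finally show ?thesis
    by (simp add: nsqrt_def sqrts_def)
qed

lemma sum_Legendre: "(\<Sum>u\<in>Zp. Legendre u (int p)) = 0"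
  using sum_square_fibres[of "\<lambda>_. 1"] by (simp add: nsqrt_Legendre sum.distrib)

lemma card_qres: "2 * card {u \<in> Zp. qres u} = p - 1"
proof -
  have "(\<Sum>u\<in>Zp. nsqrt u) = (\<Sum>u\<in>{0}. nsqrt u) + (\<Sum>u\<in>{u \<in> Zp. qres u}. 2)"
    using p_gt_2 not_qres_0 not_dvd_Zp by (intro sum_Zp_split) (auto simp: nsqrt_not_dvd)
  moreover have "(\<Sum>u\<in>Zp. nsqrt u) = int p"
    using sum_square_fibres[of "\<lambda>_. 1"] by simp
  ultimately show ?thesis
    by (simp add: nsqrt_eq_1)
qed

lemma bij_betw_affine_mod:
  assumes "\<not> int p dvd c"
  shows "bij_betw (\<lambda>w. (a + c * w) mod int p) Zp Zp"
proof -
  have "inj_on (\<lambda>w. (a + c * w) mod int p) Zp"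
  proof
    fix x y assume "x \<in> Zp" "y \<in> Zp" "(a + c * x) mod int p = (a + c * y) mod int p"
    then have "int p dvd c * (x - y)" and "x \<in> Zp" "y \<in> Zp"
      by (auto simp: mod_eq_dvd_iff algebra_simps)
    then show "x = y"
      using assms prime_int_p by (simp add: prime_dvd_mult_iff dvd_diff_Zp_iff)
  qed
  moreover have "(\<lambda>w. (a + c * w) mod int p) ` Zp = Zp"
    using p_gt_2 calculation by (intro endo_inj_surj) auto
  ultimately show ?thesis
    by (simp add: bij_betw_def)
qed

lemma sum_affine_mod:
  "\<not> int p dvd c \<Longrightarrow> (\<Sum>w\<in>Zp. g ((a + c * w) mod int p)) = (\<Sum>w\<in>Zp. g w)"
  using sum.reindex_bij_betw[OF bij_betw_affine_mod] by blast

lemma sum_Legendre_affine: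
  assumes "\<not> int p dvd c"
  shows "(\<Sum>w\<in>Zp. Legendre (a + c * w) (int p)) = 0"
  using sum_affine_mod[OF assms, of "\<lambda>t. Legendre t (int p)" a] sum_Legendre
  by (simp add: Legendre_mod)

lemma not_dvd_imp_coprime: "\<not> int p dvd c \<Longrightarrow> coprime c (int p)"
  using prime_int_p prime_imp_coprime coprime_commute by blast

lemma bij_betw_modular_inverse: "bij_betw (modular_inverse (int p)) {1..<int p} {1..<int p}"
proof -
  have "modular_inverse (int p) w \<in> {1..<int p}" and "modular_inverse (int p) (modular_inverse (int p) w) = w"
    if "w \<in> {1..<int p}" for w
  proof -
    have "coprime w (int p)"
      using that not_dvd_Zp not_dvd_imp_coprime by simp
    then show "modular_inverse (int p) w \<in> {1..<int p}"
      using p_gt_2 mult_modular_inverse_int_pos[of "int p" w] by (simp add: modular_inverse_int_less)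
    show "modular_inverse (int p) (modular_inverse (int p) w) = w"
      using that cong_modular_inverse1[OF \<open>coprime w (int p)\<close>]
      by (intro modular_inverse_int_eqI) (auto simp: mult.commute)
  qed
  then show ?thesis
    by (intro bij_betw_byWitness[where f' = "modular_inverse (int p)"]) auto
qed

lemma Jacobi_sum:
  "(\<Sum>w\<in>Zp. Legendre w (int p) * Legendre (1 - w) (int p)) = - Legendre (-1) (int p)"
proof -
  define U where "U = {1..<int p}"
  define recip where "recip = modular_inverse (int p)"
  have Zp_eq: "Zp = insert 0 U"
    using p_gt_2 by (auto simp: U_def)
  have recip_cong: "[w * recip w = 1] (mod int p)" if "w \<in> U" for w
  proof -
    have "\<not> int p dvd w"
      using that not_dvd_Zp by (simp add: U_def)
    then show ?thesis
      unfolding recip_def by (intro cong_modular_inverse1 not_dvd_imp_coprime)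
  qed
  txt \<open>Substitute w by 1/w - 1: w (1 - w) = w^2 (1/w - 1), and 1/w - 1 runs through all
    residues but -1.\<close>
  have Legendre_term: "Legendre w (int p) * Legendre (1 - w) (int p) = Legendre (recip w - 1) (int p)"
    if "w \<in> U" for w
  proof -
    have "[w^2 * (recip w - 1) = w * (w * recip w) - w^2] (mod int p)"
      by (simp add: power2_eq_square algebra_simps)
    also have "[w * (w * recip w) - w^2 = w * 1 - w^2] (mod int p)"
      by (intro cong_diff cong_mult cong_refl recip_cong that)
    finally have "[w * (1 - w) = w^2 * (recip w - 1)] (mod int p)"
      by (simp add: cong_sym_eq power2_eq_square algebra_simps)
    then have "Legendre (w * (1 - w)) (int p) = Legendre (recip w - 1) (int p)"
      using Legendre_cong Legendre_square_mult not_dvd_Zp that by (auto simp: U_def)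
    then show ?thesis
      by (simp add: Legendre_mult)
  qed
  have "(\<Sum>w\<in>Zp. Legendre w (int p) * Legendre (1 - w) (int p))
      = (\<Sum>w\<in>U. Legendre w (int p) * Legendre (1 - w) (int p))"
    by (simp add: Zp_eq U_def Legendre_def)
  also have "\<dots> = (\<Sum>w\<in>U. Legendre (recip w - 1) (int p))"
    by (intro sum.cong refl Legendre_term)
  also have "\<dots> = (\<Sum>z\<in>U. Legendre (z - 1) (int p))"
    unfolding U_def recip_def by (rule sum.reindex_bij_betw[OF bij_betw_modular_inverse])
  also have "\<dots> = (\<Sum>z\<in>Zp. Legendre (- 1 + 1 * z) (int p)) - Legendre (-1) (int p)"
    by (simp add: Zp_eq U_def)
  also have "\<dots> = - Legendre (-1) (int p)"
    using sum_Legendre_affine[OF not_dvd_1, of "-1"] by simp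
  finally show ?thesis .
qed

section \<open>Translation classes of 4-cliques\<close>

definition translate :: "int \<Rightarrow> int set \<Rightarrow> int set" where
  "translate t A = (\<lambda>x. (x + t) mod int p) ` A"

lemma transl_rel_translate:
  "transl_rel p = {(A, B). A \<in> K4_sets p \<and> B \<in> K4_sets p \<and> (\<exists>t. B = translate t A)}"
  by (simp add: transl_rel_def translate_def)

lemma K4_sets_subset: "A \<in> K4_sets p \<Longrightarrow> A \<subseteq> Zp"
  by (simp add: K4_sets_def)

lemma finite_K4_sets: "finite (K4_sets p)"
  by (rule finite_subset[of _ "Pow Zp"]) (auto dest: K4_sets_subset)

lemma inj_on_translate: "A \<subseteq> Zp \<Longrightarrow> inj_on (\<lambda>x. (x + t) mod int p) A"
  by (rule inj_onI) (auto simp: mod_eq_dvd_iff dvd_diff_Zp_iff subset_iff)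

lemma translate_K4_sets:
  assumes A: "A \<in> K4_sets p"
  shows "translate t A \<in> K4_sets p"
proof -
  have "card (translate t A) = 4"
    using A card_image[OF inj_on_translate[OF K4_sets_subset[OF A]]]
    by (simp add: translate_def K4_sets_def)
  moreover have "Legendre (x - y) (int p) = 1"
    if xy: "x \<in> translate t A" "y \<in> translate t A" "x \<noteq> y" for x y
  proof -
    obtain a b where ab: "a \<in> A" "b \<in> A" "x = (a + t) mod int p" "y = (b + t) mod int p"
      using xy(1,2) by (auto simp: translate_def)
    then have "[x - y = a - b] (mod int p)"
      using cong_diff[of x "a + t" "int p" y "b + t"] by (simp add: cong_def)
    moreover have "a \<noteq> b"
      using ab xy(3) by auto
    ultimately show ?thesis
      using A ab Legendre_cong by (auto simp: K4_sets_def)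
  qed
  moreover have "translate t A \<subseteq> Zp"
    using p_gt_2 by (auto simp: translate_def)
  ultimately show ?thesis
    by (simp add: K4_sets_def)
qed

lemma translate_translate: "translate s (translate t A) = translate (t + s) A"
  unfolding translate_def image_image by (intro image_cong refl) (simp add: mod_add_left_eq add.assoc)

lemma translate_0:
  assumes "A \<subseteq> Zp"
  shows "translate 0 A = A"
proof -
  have "translate 0 A = id ` A"
    unfolding translate_def using assms by (intro image_cong refl) auto
  then show ?thesis
    by simp
qed

lemma translate_mod: "translate (t mod int p) A = translate t A"
  unfolding translate_def by (intro image_cong refl) (simp add: mod_add_right_eq)

lemma equiv_transl_rel: "equiv (K4_sets p) (transl_rel p)"
proof (rule equivI)
  show "transl_rel p \<subseteq> K4_sets p \<times> K4_sets p"
    by (auto simp: transl_rel_translate)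
  show "refl_on (K4_sets p) (transl_rel p)"
  proof (rule refl_onI)
    fix A assume A: "A \<in> K4_sets p"
    then have "A = translate 0 A"
      using translate_0[OF K4_sets_subset] by simp
    with A show "(A, A) \<in> transl_rel p"
      unfolding transl_rel_translate by blast
  qed
  show "sym (transl_rel p)"
  proof (rule symI)
    fix A B assume "(A, B) \<in> transl_rel p"
    then obtain t where AB: "A \<in> K4_sets p" "B \<in> K4_sets p" "B = translate t A"
      by (auto simp: transl_rel_translate)
    then have "A = translate (- t) B"
      using translate_translate[of "- t" t A] translate_0[OF K4_sets_subset] by simp
    with AB show "(B, A) \<in> transl_rel p"
      unfolding transl_rel_translate by blast
  qed
  show "trans (transl_rel p)"
  proof (rule transI)
    fix A B C assume "(A, B) \<in> transl_rel p" "(B, C) \<in> transl_rel p"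
    then obtain s t where "A \<in> K4_sets p" "C \<in> K4_sets p" "B = translate t A" "C = translate s B"
      by (auto simp: transl_rel_translate)
    then show "(A, C) \<in> transl_rel p"
      unfolding transl_rel_translate by (auto simp: translate_translate)
  qed
qed

lemma translate_sum_cong:
  assumes "A \<in> K4_sets p"
  shows "[\<Sum>(translate t A) = \<Sum>A + 4 * t] (mod int p)"
proof -
  have "\<Sum>(translate t A) = (\<Sum>x\<in>A. (x + t) mod int p)"
    using sum.reindex[OF inj_on_translate[OF K4_sets_subset[OF assms]], of id]
    by (simp add: translate_def)
  also have "[\<dots> = (\<Sum>x\<in>A. x + t)] (mod int p)"
    by (rule cong_sum) simp
  also have "(\<Sum>x\<in>A. x + t) = \<Sum>A + 4 * t"
    using assms by (simp add: sum.distrib K4_sets_def)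
  finally show ?thesis .
qed

lemma card_transl_class:
  assumes A: "A \<in> K4_sets p"
  shows "card (transl_rel p `` {A}) = p"
proof -
  have "transl_rel p `` {A} = (\<lambda>t. translate t A) ` Zp"
  proof
    show "transl_rel p `` {A} \<subseteq> (\<lambda>t. translate t A) ` Zp"
    proof
      fix B assume "B \<in> transl_rel p `` {A}"
      then obtain t where "B = translate (t mod int p) A"
        by (auto simp: transl_rel_translate translate_mod)
      then show "B \<in> (\<lambda>t. translate t A) ` Zp"
        using p_gt_2 by simp
    qed
    show "(\<lambda>t. translate t A) ` Zp \<subseteq> transl_rel p `` {A}"
      using A translate_K4_sets by (auto simp: transl_rel_translate)
  qed
  moreover have "inj_on (\<lambda>t. translate t A) Zp"
  proof
    fix s t assume st: "s \<in> Zp" "t \<in> Zp" "translate s A = translate t A"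
    then have "[\<Sum>A + 4 * s = \<Sum>A + 4 * t] (mod int p)"
      using translate_sum_cong[OF A] by (metis cong_sym cong_trans)
    then have "int p dvd 4 * (s - t)"
      by (simp add: cong_iff_dvd_diff algebra_simps)
    moreover have "\<not> int p dvd 4"
      using not_dvd_mult[OF not_dvd_2 not_dvd_2] by simp
    ultimately have "int p dvd s - t"
      using prime_dvd_multD[OF prime_int_p] by blast
    with st show "s = t"
      by (simp add: dvd_diff_Zp_iff)
  qed
  ultimately show ?thesis
    by (simp add: card_image)
qed

lemma card_K4_sets: "card (K4_sets p) = p * n_K4 p"
  using card_quotient_uniform[OF equiv_transl_rel finite_K4_sets card_transl_class]
  by (simp add: n_K4_def)

definition ordered_K4 :: "int list set" where
  "ordered_K4 = {xs. distinct xs \<and> set xs \<in> K4_sets p}"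

lemma card_orderings_K4:
  assumes "A \<in> K4_sets p"
  shows "card {xs. distinct xs \<and> set xs = A} = 24"
proof -
  have A: "finite A" "card A = 4"
    using finite_subset[OF K4_sets_subset[OF assms]] assms by (auto simp: K4_sets_def)
  then have "distinct xs \<and> set xs = A \<longleftrightarrow> length xs = 4 \<and> distinct xs \<and> set xs \<subseteq> A" for xs
    using card_subset_eq[OF A(1), of "set xs"] distinct_card[of xs] by auto
  then have "{xs. distinct xs \<and> set xs = A} = {xs. length xs = 4 \<and> distinct xs \<and> set xs \<subseteq> A}"
    by simp
  moreover have "\<Prod>{1..4::nat} = 24"
    by (simp add: numeral_eq_Suc atLeastAtMostSuc_conv)
  ultimately show ?thesis
    using card_lists_distinct_length_eq[OF A(1), of 4] A(2) by simp
qed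

lemma card_ordered_K4: "card ordered_K4 = 24 * card (K4_sets p)"
proof -
  have "ordered_K4 = (\<Union>A\<in>K4_sets p. {xs. distinct xs \<and> set xs = A})"
    by (auto simp: ordered_K4_def)
  then have "card ordered_K4 = (\<Sum>A\<in>K4_sets p. card {xs. distinct xs \<and> set xs = A})"
    using finite_K4_sets card_orderings_K4 by (simp only:) (intro card_UN_disjoint, auto intro: card_ge_0_finite)
  then show ?thesis
    by (simp add: card_orderings_K4)
qed

section \<open>Points of the surface\<close>

definition S_cone :: "(nat \<Rightarrow> int) set" where
  "S_cone = {x \<in> PiE {0..5} (\<lambda>_. Zp).
     [x 1 ^ 2 - x 2 ^ 2 = x 3 ^ 2] (mod int p) \<and>
     [x 0 ^ 2 - x 1 ^ 2 = x 4 ^ 2] (mod int p) \<and>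
     [x 0 ^ 2 - x 2 ^ 2 = x 5 ^ 2] (mod int p)}"

lemma finite_S_cone: "finite S_cone"
  by (rule finite_subset[of _ "PiE {0..5} (\<lambda>_. Zp)"]) (auto simp: S_cone_def intro: finite_PiE)

lemma card_S_cone_S_vecs: "card S_cone = card (S_vecs p) + 1"
proof -
  define zero :: "nat \<Rightarrow> int" where "zero = (\<lambda>i\<in>{0..5}. 0)"
  have "x = zero \<longleftrightarrow> (\<forall>i\<in>{0..5}. x i = 0)" if "x \<in> PiE {0..5} (\<lambda>_. Zp)" for x
    using that by (auto simp: zero_def PiE_iff extensional_def fun_eq_iff)
  then have "S_vecs p = S_cone - {zero}"
    by (auto simp: S_vecs_def S_cone_def)
  moreover have "zero \<in> S_cone"
    using p_gt_2 by (auto simp: zero_def S_cone_def)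
  ultimately show ?thesis
    using card_Suc_Diff1[OF finite_S_cone] by simp
qed

lemma finite_S_vecs: "finite (S_vecs p)"
  by (rule finite_subset[OF _ finite_S_cone]) (auto simp: S_vecs_def S_cone_def)

lemma bij_betw_S_cone_Sigma:
  "bij_betw (\<lambda>x. ((x 0, x 1, x 2), (x 3, x 4, x 5))) S_cone
     (SIGMA (a, b, c) : Zp \<times> Zp \<times> Zp.
        sqrts (b^2 - c^2) \<times> sqrts (a^2 - b^2) \<times> sqrts (a^2 - c^2))"
proof (rule bij_betw_byWitness[where f' = "\<lambda>((a, b, c), (d, e, f)). \<lambda>i\<in>{0..5}. [a, b, c, d, e, f] ! i"])
  have six: "{0..5} = {0, 1, 2, 3, 4, 5 :: nat}"
    by auto
  show "\<forall>x\<in>S_cone. (\<lambda>((a, b, c), (d, e, f)). \<lambda>i\<in>{0..5}. [a, b, c, d, e, f] ! i)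
      ((x 0, x 1, x 2), (x 3, x 4, x 5)) = x"
    by (auto simp: S_cone_def PiE_iff extensional_def fun_eq_iff six)
  show "(\<lambda>((a, b, c), (d, e, f)). \<lambda>i\<in>{0..5}. [a, b, c, d, e, f] ! i) `
      (SIGMA (a, b, c) : Zp \<times> Zp \<times> Zp. sqrts (b^2 - c^2) \<times> sqrts (a^2 - b^2) \<times> sqrts (a^2 - c^2))
      \<subseteq> S_cone"
    by (auto simp: S_cone_def sqrts_def PiE_iff cong_sym_eq six)
qed (auto simp: S_cone_def sqrts_def PiE_iff cong_sym_eq)

lemma nsqrt_mod_diff [simp]:
  "nsqrt (x mod int p - y) = nsqrt (x - y)" "nsqrt (y - x mod int p) = nsqrt (y - x)"
  by (intro nsqrt_cong cong_diff; simp)+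

definition clique_weight :: "int \<Rightarrow> int \<Rightarrow> int \<Rightarrow> int" where
  "clique_weight u v w = nsqrt u * nsqrt v * nsqrt w * nsqrt (u - v) * nsqrt (u - w) * nsqrt (v - w)"

definition triangle_sum :: "int \<Rightarrow> int \<Rightarrow> int" where
  "triangle_sum u v = (\<Sum>w\<in>Zp. nsqrt w * nsqrt (u - w) * nsqrt (v - w))"

lemma sum_clique_weight_eq: "(\<Sum>w\<in>Zp. clique_weight u v w) = nsqrt u * nsqrt v * nsqrt (u - v) * triangle_sum u v"
  by (simp add: clique_weight_def triangle_sum_def sum_distrib_left ac_simps)

lemma card_S_cone: "int (card S_cone) = (\<Sum>u\<in>Zp. \<Sum>v\<in>Zp. \<Sum>w\<in>Zp. clique_weight u v w)"
proof -
  define G where "G u v w = nsqrt (u - v) * nsqrt (u - w) * nsqrt (v - w)" for u v w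
  have "card S_cone = card (SIGMA (a, b, c) : Zp \<times> Zp \<times> Zp.
      sqrts (b^2 - c^2) \<times> sqrts (a^2 - b^2) \<times> sqrts (a^2 - c^2))"
    by (rule bij_betw_same_card[OF bij_betw_S_cone_Sigma])
  also have "\<dots> = (\<Sum>t \<in> Zp \<times> Zp \<times> Zp.
      card ((\<lambda>(a, b, c). sqrts (b^2 - c^2) \<times> sqrts (a^2 - b^2) \<times> sqrts (a^2 - c^2)) t))"
    by (rule card_SigmaI) (auto simp: finite_sqrts)
  finally have "int (card S_cone) = (\<Sum>a\<in>Zp. \<Sum>b\<in>Zp. \<Sum>c\<in>Zp. G (a^2) (b^2) (c^2))"
    by (simp add: card_cartesian_product sum.cartesian_product nsqrt_def G_def ac_simps split_def)
  also have "\<dots> = (\<Sum>a\<in>Zp. \<Sum>b\<in>Zp. \<Sum>c\<in>Zp. G (a^2 mod int p) (b^2 mod int p) (c^2 mod int p))"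
    by (simp add: G_def)
  also have "\<dots> = (\<Sum>a\<in>Zp. \<Sum>v\<in>Zp. nsqrt v * (\<Sum>w\<in>Zp. nsqrt w * G (a^2 mod int p) v w))"
    by (simp only: sum_square_fibres[of "G _ _"] sum_square_fibres[of "\<lambda>v. \<Sum>w\<in>Zp. nsqrt w * G _ v w"])
  also have "\<dots> = (\<Sum>u\<in>Zp. nsqrt u * (\<Sum>v\<in>Zp. nsqrt v * (\<Sum>w\<in>Zp. nsqrt w * G u v w)))"
    by (rule sum_square_fibres)
  finally show ?thesis
    by (simp add: clique_weight_def G_def sum_distrib_left ac_simps)
qed

definition scale :: "int \<Rightarrow> (nat \<Rightarrow> int) \<Rightarrow> nat \<Rightarrow> int" where
  "scale c x = (\<lambda>i\<in>{0..5}. (c * x i) mod int p)"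

lemma proj_rel_scale:
  "proj_rel p = {(x, y). x \<in> S_vecs p \<and> y \<in> S_vecs p \<and> (\<exists>c. \<not> int p dvd c \<and> y = scale c x)}"
  by (simp add: proj_rel_def scale_def)

lemma S_vecs_nonzero_coord:
  assumes "x \<in> S_vecs p"
  obtains i where "i \<in> {0..5}" and "\<not> int p dvd x i"
  using assms not_dvd_Zp by (fastforce simp: S_vecs_def PiE_iff)

lemma scale_S_vecs:
  assumes x: "x \<in> S_vecs p" and c: "\<not> int p dvd c"
  shows "scale c x \<in> S_vecs p"
proof -
  obtain i where "i \<in> {0..5}" "\<not> int p dvd x i"
    using S_vecs_nonzero_coord[OF x] .
  then have "scale c x i \<noteq> 0" and "i \<in> {0..5}"
    using not_dvd_mult[OF c] by (auto simp: scale_def dvd_eq_mod_eq_0)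
  then have "\<exists>i\<in>{0..5}. scale c x i \<noteq> 0"
    by blast
  moreover have "scale c x \<in> PiE {0..5} (\<lambda>_. Zp)"
    using p_gt_2 by (auto simp: scale_def)
  ultimately show ?thesis
    using x by (simp add: S_vecs_def scale_def cong_scale_squares)
qed

lemma scale_1: "x \<in> PiE {0..5} (\<lambda>_. Zp) \<Longrightarrow> scale 1 x = x"
  by (auto simp: scale_def PiE_iff extensional_def fun_eq_iff)

lemma scale_scale: "scale c (scale c' x) = scale (c * c') x"
  by (auto simp: scale_def fun_eq_iff mod_mult_right_eq ac_simps)

lemma scale_cong: "[c = c'] (mod int p) \<Longrightarrow> scale c x = scale c' x"
  by (auto simp: scale_def fun_eq_iff cong_def mod_mult_left_eq[of c, symmetric]
      mod_mult_left_eq[of c', symmetric])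

lemma scale_inverse:
  assumes "x \<in> PiE {0..5} (\<lambda>_. Zp)" and "\<not> int p dvd c"
  obtains c' where "\<not> int p dvd c'" and "scale c' (scale c x) = x"
proof -
  define c' where "c' = modular_inverse (int p) c"
  have "[c' * c = 1] (mod int p)"
    unfolding c'_def by (intro cong_modular_inverse2 not_dvd_imp_coprime assms(2))
  then have "scale c' (scale c x) = x"
    using assms(1) scale_cong[of "c' * c" 1] by (simp add: scale_scale scale_1)
  moreover have "\<not> int p dvd c'"
    using cong_dvd_iff[OF \<open>[c' * c = 1] (mod int p)\<close>] not_dvd_1 by (metis dvd_mult2)
  ultimately show ?thesis
    using that by blast
qed

lemma equiv_proj_rel: "equiv (S_vecs p) (proj_rel p)"
proof (rule equivI)
  show "proj_rel p \<subseteq> S_vecs p \<times> S_vecs p"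
    by (auto simp: proj_rel_scale)
  show "refl_on (S_vecs p) (proj_rel p)"
  proof (rule refl_onI)
    fix x assume x: "x \<in> S_vecs p"
    then have "x = scale 1 x"
      by (simp add: S_vecs_def scale_1)
    then show "(x, x) \<in> proj_rel p"
      using x not_dvd_1 unfolding proj_rel_scale by blast
  qed
  show "sym (proj_rel p)"
  proof (rule symI)
    fix x y assume "(x, y) \<in> proj_rel p"
    then obtain c where xy: "x \<in> S_vecs p" "y \<in> S_vecs p" "\<not> int p dvd c" "y = scale c x"
      by (auto simp: proj_rel_scale)
    obtain c' where "\<not> int p dvd c'" "scale c' y = x"
      using scale_inverse[of x c] xy by (auto simp: S_vecs_def)
    then show "(y, x) \<in> proj_rel p"
      using xy unfolding proj_rel_scale by blast
  qed
  show "trans (proj_rel p)"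
  proof (rule transI)
    fix x y z assume "(x, y) \<in> proj_rel p" "(y, z) \<in> proj_rel p"
    then obtain c c' where "x \<in> S_vecs p" "z \<in> S_vecs p" "\<not> int p dvd c" "\<not> int p dvd c'"
      "z = scale (c' * c) x"
      by (auto simp: proj_rel_scale scale_scale)
    then show "(x, z) \<in> proj_rel p"
      unfolding proj_rel_scale using not_dvd_mult by blast
  qed
qed

lemma proj_class_scale:
  assumes x: "x \<in> S_vecs p"
  shows "proj_rel p `` {x} = (\<lambda>c. scale c x) ` {1..<int p}"
proof
  show "proj_rel p `` {x} \<subseteq> (\<lambda>c. scale c x) ` {1..<int p}"
  proof
    fix y assume "y \<in> proj_rel p `` {x}"
    then obtain c where c: "\<not> int p dvd c" "y = scale c x"
      by (auto simp: proj_rel_scale)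
    then have "y = scale (c mod int p) x"
      using scale_cong[of c "c mod int p" x] by (simp add: cong_def)
    moreover have "c mod int p \<noteq> 0" and "0 \<le> c mod int p" and "c mod int p < int p"
      using c p_gt_2 by (simp_all add: dvd_eq_mod_eq_0)
    then have "c mod int p \<in> {1..<int p}"
      by simp
    ultimately show "y \<in> (\<lambda>c. scale c x) ` {1..<int p}"
      by blast
  qed
  show "(\<lambda>c. scale c x) ` {1..<int p} \<subseteq> proj_rel p `` {x}"
  proof
    fix y assume "y \<in> (\<lambda>c. scale c x) ` {1..<int p}"
    then obtain c where "c \<in> {1..<int p}" "y = scale c x"
      by blast
    moreover from this have "\<not> int p dvd c"
      using not_dvd_Zp by simp
    ultimately show "y \<in> proj_rel p `` {x}"
      using x scale_S_vecs unfolding proj_rel_scale by blast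
  qed
qed

lemma card_proj_class:
  assumes x: "x \<in> S_vecs p"
  shows "card (proj_rel p `` {x}) = p - 1"
proof -
  have "inj_on (\<lambda>c. scale c x) {1..<int p}"
  proof
    fix c c' assume cc': "c \<in> {1..<int p}" "c' \<in> {1..<int p}" "scale c x = scale c' x"
    obtain i where i: "i \<in> {0..5}" "\<not> int p dvd x i"
      using S_vecs_nonzero_coord[OF x] .
    then have "int p dvd (c - c') * x i"
      using fun_cong[OF cc'(3), of i] by (simp add: scale_def mod_eq_dvd_iff left_diff_distrib)
    then have "int p dvd c - c'"
      using i(2) prime_dvd_multD[OF prime_int_p] by blast
    with cc' show "c = c'"
      by (simp add: dvd_diff_Zp_iff)
  qed
  then show ?thesis
    by (simp add: proj_class_scale[OF x] card_image)
qed

lemma card_S_cone_card_S: "int (card S_cone) = (int p - 1) * int (card_S p) + 1"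
proof -
  have "(p - 1) * card_S p = card (S_vecs p)"
    using card_quotient_uniform[OF equiv_proj_rel finite_S_vecs card_proj_class]
    by (simp add: card_S_def)
  then have "int (card (S_vecs p)) = int (p - 1) * int (card_S p)"
    by (metis of_nat_mult)
  then show ?thesis
    using p_gt_2 by (simp add: card_S_cone_S_vecs of_nat_diff)
qed

end

locale prime_one_mod_four = odd_prime +
  fixes k :: nat
  assumes p_eq: "p = 4 * k + 1"
begin

lemma Legendre_minus_one: "Legendre (-1) (int p) = 1"
proof (rule sign_cong_imp_eq)
  show "Legendre (-1) (int p) \<in> {-1, 0, 1}"
    by (rule Legendre_range)
  have "(p - 1) div 2 = 2 * k"
    using p_eq by simp
  then show "[Legendre (-1) (int p) = 1] (mod int p)"
    using Legendre_euler[of "-1"] by simp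
qed simp

lemma qres_uminus: "qres (- a) = qres a"
  using Legendre_mult[of "-1" a] by (simp add: qres_def Legendre_minus_one)

lemma qres_diff_commute: "qres (a - b) = qres (b - a)"
  using qres_uminus[of "b - a"] by simp

lemma nsqrt_uminus: "nsqrt (- a) = nsqrt a"
  using Legendre_mult[of "-1" a] by (simp add: nsqrt_Legendre Legendre_minus_one)

lemma card_qres_2k: "card {u \<in> Zp. qres u} = 2 * k"
  using card_qres p_eq by simp

lemma card_qres_consecutive: "int (card {w \<in> Zp. qres w \<and> qres (1 - w)}) = int k - 1"
proof -
  have "\<not> int p dvd -1"
    using not_dvd_1 by simp
  then have "(\<Sum>w\<in>Zp. nsqrt w * nsqrt (1 - w)) = int p - 1"
    using sum_Legendre sum_Legendre_affine[of "-1" 1] Jacobi_sum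
    by (simp add: nsqrt_Legendre algebra_simps sum.distrib Legendre_minus_one)
  moreover have "(\<Sum>w\<in>Zp. nsqrt w * nsqrt (1 - w))
      = (\<Sum>w\<in>{0, 1}. nsqrt w * nsqrt (1 - w)) + (\<Sum>w\<in>{w \<in> Zp. qres w \<and> qres (1 - w)}. 4)"
    using p_gt_2 not_qres_0 not_dvd_Zp not_dvd_diff_Zp[of 1]
    by (intro sum_Zp_split) (auto simp: nsqrt_not_dvd)
  moreover have "nsqrt 0 = 1"
    by (simp add: nsqrt_eq_1)
  moreover have "nsqrt 1 = 2"
    by (simp add: nsqrt_Legendre Legendre_one)
  ultimately show ?thesis
    using p_eq by simp
qed

lemma card_qres_pairs:
  assumes "qres u"
  shows "int (card {w \<in> Zp. qres w \<and> qres (u - w)}) = int k - 1"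
proof -
  have "qres ((0 + u * w) mod int p) \<and> qres (u - (0 + u * w) mod int p) \<longleftrightarrow> qres w \<and> qres (1 - w)"
    for w
  proof -
    have "[u - (0 + u * w) mod int p = u * (1 - w)] (mod int p)"
      by (simp add: cong_def mod_diff_right_eq algebra_simps)
    then have "qres (u - (0 + u * w) mod int p) = qres (1 - w)"
      using qres_cong assms by (simp add: qres_mult_iff)
    moreover have "qres ((0 + u * w) mod int p) = qres w"
      using assms qres_cong[of "(0 + u * w) mod int p" "u * w"] by (simp add: cong_def qres_mult_iff)
    ultimately show ?thesis
      by simp
  qed
  then have "(\<Sum>w\<in>Zp. of_bool (qres w \<and> qres (u - w)) :: int) = (\<Sum>w\<in>Zp. of_bool (qres w \<and> qres (1 - w)))"
    using sum_affine_mod[OF qres_not_dvd[OF assms], of "\<lambda>w. of_bool (qres w \<and> qres (u - w)) :: int" 0]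
    by simp
  then show ?thesis
    using card_qres_consecutive by (simp add: Int_def)
qed

definition common_nbrs :: "int \<Rightarrow> int \<Rightarrow> nat" where
  "common_nbrs u v = card {w \<in> Zp. qres w \<and> qres (u - w) \<and> qres (v - w)}"

lemma sum_nsqrt_pair:
  fixes f g :: "int \<Rightarrow> int"
  assumes v: "qres v" "v \<in> Zp" and "f 0 = 0" and "g 0 = 0"
  shows "(\<Sum>w\<in>Zp. f (nsqrt w) * g (nsqrt (v - w))) = f 1 * g 2 + f 2 * g 1 + f 2 * g 2 * (int k - 1)"
proof -
  have "v \<noteq> 0"
    using v not_qres_0 by blast
  have "(\<Sum>w\<in>Zp. f (nsqrt w) * g (nsqrt (v - w)))
      = (\<Sum>w\<in>{0, v}. f (nsqrt w) * g (nsqrt (v - w))) + (\<Sum>w\<in>{w \<in> Zp. qres w \<and> qres (v - w)}. f 2 * g 2)"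
    using v p_gt_2 assms(3,4) not_qres_0 not_dvd_Zp not_dvd_diff_Zp[of v]
    by (intro sum_Zp_split) (auto simp: nsqrt_not_dvd)
  then show ?thesis
    using \<open>v \<noteq> 0\<close> card_qres_pairs[OF v(1)] by (simp add: nsqrt_eq_1 nsqrt_qres v)
qed

lemma triangle_sum_qres:
  assumes u: "qres u" "u \<in> Zp" and v: "qres v" "v \<in> Zp" and uv: "qres (u - v)"
  shows "triangle_sum u v = 12 + 8 * int (common_nbrs u v)"
proof -
  have "u \<noteq> 0" "v \<noteq> 0" "u \<noteq> v"
    using u v uv not_qres_0 by auto
  have "(\<Sum>w\<in>Zp. nsqrt w * nsqrt (u - w) * nsqrt (v - w))
      = (\<Sum>w\<in>{0, u, v}. nsqrt w * nsqrt (u - w) * nsqrt (v - w))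
        + (\<Sum>w\<in>{w \<in> Zp. qres w \<and> qres (u - w) \<and> qres (v - w)}. 8)"
    using u v p_gt_2 not_qres_0 not_dvd_Zp not_dvd_diff_Zp[of u] not_dvd_diff_Zp[of v]
    by (intro sum_Zp_split) (auto simp: nsqrt_not_dvd)
  then show ?thesis
    using \<open>u \<noteq> 0\<close> \<open>v \<noteq> 0\<close> \<open>u \<noteq> v\<close> u v uv qres_diff_commute[of u v]
    by (simp add: nsqrt_eq_1 nsqrt_qres common_nbrs_def triangle_sum_def)
qed

lemma triangle_sum_0_0: "triangle_sum 0 0 = 1 + 16 * int k"
proof -
  have "triangle_sum 0 0 = (\<Sum>w\<in>{0}. nsqrt w * nsqrt (0 - w) * nsqrt (0 - w)) + (\<Sum>w\<in>{w \<in> Zp. qres w}. 8)"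
    unfolding triangle_sum_def using p_gt_2 not_qres_0 not_dvd_Zp
    by (intro sum_Zp_split) (auto simp: nsqrt_not_dvd nsqrt_uminus)
  then show ?thesis
    using card_qres_2k by (simp add: nsqrt_eq_1)
qed

lemma triangle_sum_0_qres: "qres v \<Longrightarrow> v \<in> Zp \<Longrightarrow> triangle_sum 0 v = 8 * int k - 2"
  using sum_nsqrt_pair[of v "\<lambda>x. x * x" "\<lambda>x. x"]
  by (simp add: triangle_sum_def nsqrt_uminus algebra_simps)

lemma triangle_sum_qres_0: "qres u \<Longrightarrow> u \<in> Zp \<Longrightarrow> triangle_sum u 0 = 8 * int k - 2"
  using triangle_sum_0_qres by (simp add: triangle_sum_def ac_simps)

lemma triangle_sum_diag: "qres u \<Longrightarrow> u \<in> Zp \<Longrightarrow> triangle_sum u u = 8 * int k - 2"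
  using sum_nsqrt_pair[of u "\<lambda>x. x" "\<lambda>x. x * x"]
  by (simp add: triangle_sum_def algebra_simps)

lemma sum_clique_weight_0:
  "(\<Sum>v\<in>Zp. \<Sum>w\<in>Zp. clique_weight 0 v w) = 1 + 64 * int k ^ 2"
proof -
  have "(\<Sum>v\<in>Zp. \<Sum>w\<in>Zp. clique_weight 0 v w)
      = (\<Sum>v\<in>{0}. \<Sum>w\<in>Zp. clique_weight 0 v w) + (\<Sum>v\<in>{v \<in> Zp. qres v}. 4 * (8 * int k - 2))"
    using p_gt_2 not_qres_0 not_dvd_Zp
    by (intro sum_Zp_split)
      (auto simp: sum_clique_weight_eq nsqrt_not_dvd nsqrt_uminus nsqrt_eq_1 triangle_sum_0_qres)
  then show ?thesis
    using card_qres_2k triangle_sum_0_0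
    by (simp add: sum_clique_weight_eq nsqrt_eq_1 power2_eq_square algebra_simps)
qed

lemma sum_clique_weight_qres:
  assumes u: "qres u" "u \<in> Zp"
  shows "(\<Sum>v\<in>Zp. \<Sum>w\<in>Zp. clique_weight u v w)
    = 160 * int k - 112 + 64 * (\<Sum>v\<in>{v \<in> Zp. qres v \<and> qres (u - v)}. int (common_nbrs u v))"
proof -
  have "u \<noteq> 0"
    using u not_qres_0 by blast
  have "(\<Sum>v\<in>Zp. \<Sum>w\<in>Zp. clique_weight u v w)
      = (\<Sum>v\<in>{0, u}. \<Sum>w\<in>Zp. clique_weight u v w)
        + (\<Sum>v\<in>{v \<in> Zp. qres v \<and> qres (u - v)}. 96 + 64 * int (common_nbrs u v))"
    using u p_gt_2 not_qres_0 not_dvd_Zp not_dvd_diff_Zp[of u]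
    by (intro sum_Zp_split)
      (auto simp: sum_clique_weight_eq nsqrt_not_dvd nsqrt_qres triangle_sum_qres)
  then show ?thesis
    using \<open>u \<noteq> 0\<close> u card_qres_pairs[OF u(1)]
    by (simp add: sum_clique_weight_eq nsqrt_eq_1 nsqrt_qres nsqrt_uminus triangle_sum_qres_0
        triangle_sum_diag sum.distrib sum_distrib_left algebra_simps)
qed

definition qres_triples :: "(int \<times> int \<times> int) set" where
  "qres_triples = {(u, v, w) \<in> Zp \<times> Zp \<times> Zp.
     qres u \<and> qres v \<and> qres w \<and> qres (u - v) \<and> qres (u - w) \<and> qres (v - w)}"

lemma card_qres_triples:
  "int (card qres_triples)
    = (\<Sum>u\<in>{u \<in> Zp. qres u}. \<Sum>v\<in>{v \<in> Zp. qres v \<and> qres (u - v)}. int (common_nbrs u v))"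
proof -
  have fin: "finite {x \<in> Zp. P x}" for P
    by (rule finite_subset[of _ Zp]) auto
  have "qres_triples = (SIGMA u : {u \<in> Zp. qres u}. SIGMA v : {v \<in> Zp. qres v \<and> qres (u - v)}.
      {w \<in> Zp. qres w \<and> qres (u - w) \<and> qres (v - w)})"
    by (auto simp: qres_triples_def)
  then have "card qres_triples = (\<Sum>u\<in>{u \<in> Zp. qres u}. card (SIGMA v : {v \<in> Zp. qres v \<and> qres (u - v)}.
      {w \<in> Zp. qres w \<and> qres (u - w) \<and> qres (v - w)}))"
    by (simp only:) (intro card_SigmaI fin finite_SigmaI ballI)
  also have "\<dots> = (\<Sum>u\<in>{u \<in> Zp. qres u}. \<Sum>v\<in>{v \<in> Zp. qres v \<and> qres (u - v)}. common_nbrs u v)"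
    unfolding common_nbrs_def by (intro sum.cong refl card_SigmaI fin ballI)
  finally show ?thesis
    by simp
qed

lemma sum_clique_weight:
  "(\<Sum>u\<in>Zp. \<Sum>v\<in>Zp. \<Sum>w\<in>Zp. clique_weight u v w)
    = 64 * int (card qres_triples) + 384 * int k ^ 2 - 224 * int k + 1"
proof -
  define X where "X u = (\<Sum>v\<in>{v \<in> Zp. qres v \<and> qres (u - v)}. int (common_nbrs u v))" for u
  have "(\<Sum>u\<in>Zp. \<Sum>v\<in>Zp. \<Sum>w\<in>Zp. clique_weight u v w)
      = (\<Sum>u\<in>{0}. \<Sum>v\<in>Zp. \<Sum>w\<in>Zp. clique_weight u v w) + (\<Sum>u\<in>{u \<in> Zp. qres u}. 160 * int k - 112 + 64 * X u)"
  proof (rule sum_Zp_split)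
    fix u assume u: "u \<in> Zp - {0}"
    show "(\<Sum>v\<in>Zp. \<Sum>w\<in>Zp. clique_weight u v w) = of_bool (qres u) * (160 * int k - 112 + 64 * X u)"
    proof (cases "qres u")
      case True
      then show ?thesis
        using u sum_clique_weight_qres by (simp add: X_def)
    next
      case False
      then show ?thesis
        using u not_dvd_Zp by (simp add: sum_clique_weight_eq nsqrt_not_dvd)
    qed
  qed (use p_gt_2 not_qres_0 in auto)
  also have "(\<Sum>u\<in>{u \<in> Zp. qres u}. 160 * int k - 112 + 64 * X u)
      = (160 * int k - 112) * int (card {u \<in> Zp. qres u}) + 64 * int (card qres_triples)"
    by (simp add: card_qres_triples X_def sum.distrib sum_distrib_left)
  finally show ?thesis
    using card_qres_2k sum_clique_weight_0 by (simp add: power2_eq_square algebra_simps)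
qed

lemma qres_triples_pairwise:
  assumes "(u, v, w) \<in> qres_triples" and "r \<in> {0, u, v, w}" and "s \<in> {0, u, v, w}" and "r \<noteq> s"
  shows "qres (r - s)"
  using assms qres_uminus qres_diff_commute by (auto simp: qres_triples_def)

lemma ordered_K4_cases:
  assumes "xs \<in> ordered_K4"
  obtains x0 x1 x2 x3 where "xs = [x0, x1, x2, x3]" and "x0 \<in> Zp" "x1 \<in> Zp" "x2 \<in> Zp" "x3 \<in> Zp"
    and "\<And>x y. x \<in> set xs \<Longrightarrow> y \<in> set xs \<Longrightarrow> x \<noteq> y \<Longrightarrow> qres (x - y)"
    and "distinct xs"
proof -
  have "length xs = 4"
    using assms distinct_card[of xs] by (auto simp: ordered_K4_def K4_sets_def)
  then obtain x0 x1 x2 x3 where "xs = [x0, x1, x2, x3]"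
    by (auto simp: numeral_eq_Suc length_Suc_conv)
  with assms that show ?thesis
    by (auto simp: ordered_K4_def K4_sets_def qres_def)
qed

lemma translated_triple_in_ordered_K4:
  assumes a: "a \<in> Zp" and t: "(u, v, w) \<in> qres_triples"
  shows "map (\<lambda>r. (a + r) mod int p) [0, u, v, w] \<in> ordered_K4"
proof -
  let ?f = "\<lambda>r. (a + r) mod int p"
  have diff: "[?f r - ?f s = r - s] (mod int p)" for r s
    using cong_diff[of "?f r" "a + r" "int p" "?f s" "a + s"] by (simp add: cong_def)
  have inj: "inj_on ?f {0, u, v, w}"
  proof (rule inj_onI, rule ccontr)
    fix r s assume rs: "r \<in> {0, u, v, w}" "s \<in> {0, u, v, w}" "?f r = ?f s" "r \<noteq> s"
    then have "int p dvd r - s"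
      using diff[of r s] by (simp add: cong_iff_dvd_diff dvd_diff_commute)
    then show False
      using qres_triples_pairwise[OF t rs(1,2,4)] qres_not_dvd by blast
  qed
  have "distinct [0, u, v, w]"
    using t not_qres_0 by (auto simp: qres_triples_def)
  then have dist: "distinct (map ?f [0, u, v, w])"
    using inj by (simp add: distinct_map)
  have "Legendre (x - y) (int p) = 1"
    if xy: "x \<in> ?f ` {0, u, v, w}" "y \<in> ?f ` {0, u, v, w}" "x \<noteq> y" for x y
  proof -
    obtain r s where rs: "r \<in> {0, u, v, w}" "s \<in> {0, u, v, w}" "x = ?f r" "y = ?f s"
      using xy(1,2) by blast
    then have "qres (r - s)"
      using xy(3) qres_triples_pairwise[OF t] by blast
    then show ?thesis
      using qres_cong[OF diff[of r s]] rs(3,4) by (simp add: qres_def)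
  qed
  moreover have "card (set (map ?f [0, u, v, w])) = 4"
    using distinct_card[OF dist] by simp
  ultimately show ?thesis
    using dist p_gt_2 by (auto simp: ordered_K4_def K4_sets_def)
qed

lemma ordered_K4_differences:
  assumes "xs \<in> ordered_K4"
  shows "(xs ! 0, (xs ! 1 - xs ! 0) mod int p, (xs ! 2 - xs ! 0) mod int p, (xs ! 3 - xs ! 0) mod int p)
    \<in> Zp \<times> qres_triples"
proof -
  obtain x0 x1 x2 x3 where xs: "xs = [x0, x1, x2, x3]" "x0 \<in> Zp" "x1 \<in> Zp" "x2 \<in> Zp" "x3 \<in> Zp"
    and qres_xs: "\<And>x y. x \<in> set xs \<Longrightarrow> y \<in> set xs \<Longrightarrow> x \<noteq> y \<Longrightarrow> qres (x - y)"
    and "distinct xs"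
    using assms by (rule ordered_K4_cases) blast
  let ?d = "\<lambda>x. (x - x0) mod int p"
  have qres_d: "qres (?d x)" if "x \<in> set xs" "x \<noteq> x0" for x
    using qres_xs[OF that(1) _ that(2)] xs(1) by (simp add: qres_mod)
  have qres_dd: "qres (?d x - ?d y)" if "x \<in> set xs" "y \<in> set xs" "x \<noteq> y" for x y
    using qres_xs[OF that] qres_cong[of "?d x - ?d y" "x - y"] by (simp add: cong_def mod_diff_eq)
  have "x1 \<noteq> x0" "x2 \<noteq> x0" "x3 \<noteq> x0" "x1 \<noteq> x2" "x1 \<noteq> x3" "x2 \<noteq> x3"
    using \<open>distinct xs\<close> xs(1) by auto
  then have "qres (?d x1)" "qres (?d x2)" "qres (?d x3)"
    and "qres (?d x1 - ?d x2)" "qres (?d x1 - ?d x3)" "qres (?d x2 - ?d x3)"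
    using qres_d qres_dd xs(1) by simp_all
  then show ?thesis
    using xs(1,2) p_gt_2 by (simp add: qres_triples_def)
qed

lemma bij_betw_ordered_K4:
  "bij_betw (\<lambda>(a, u, v, w). map (\<lambda>r. (a + r) mod int p) [0, u, v, w]) (Zp \<times> qres_triples) ordered_K4"
proof (rule bij_betw_byWitness[where f' = "\<lambda>xs. (xs ! 0, (xs ! 1 - xs ! 0) mod int p,
    (xs ! 2 - xs ! 0) mod int p, (xs ! 3 - xs ! 0) mod int p)"])
  show "(\<lambda>(a, u, v, w). map (\<lambda>r. (a + r) mod int p) [0, u, v, w]) ` (Zp \<times> qres_triples) \<subseteq> ordered_K4"
    using translated_triple_in_ordered_K4 by auto
  show "\<forall>t\<in>Zp \<times> qres_triples. (\<lambda>xs. (xs ! 0, (xs ! 1 - xs ! 0) mod int p, (xs ! 2 - xs ! 0) mod int p,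
      (xs ! 3 - xs ! 0) mod int p)) ((\<lambda>(a, u, v, w). map (\<lambda>r. (a + r) mod int p) [0, u, v, w]) t) = t"
    by (auto simp: qres_triples_def mod_diff_left_eq)
  show "\<forall>xs\<in>ordered_K4. (\<lambda>(a, u, v, w). map (\<lambda>r. (a + r) mod int p) [0, u, v, w])
      (xs ! 0, (xs ! 1 - xs ! 0) mod int p, (xs ! 2 - xs ! 0) mod int p, (xs ! 3 - xs ! 0) mod int p) = xs"
    by (auto elim!: ordered_K4_cases simp: mod_add_right_eq)
  show "(\<lambda>xs. (xs ! 0, (xs ! 1 - xs ! 0) mod int p, (xs ! 2 - xs ! 0) mod int p, (xs ! 3 - xs ! 0) mod int p))
      ` ordered_K4 \<subseteq> Zp \<times> qres_triples"
    using ordered_K4_differences by blast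
qed

lemma card_qres_triples_K4: "int (card qres_triples) = 24 * int (n_K4 p)"
proof -
  have "p * card qres_triples = card ordered_K4"
    using bij_betw_same_card[OF bij_betw_ordered_K4] by (simp add: card_cartesian_product)
  also have "\<dots> = p * (24 * n_K4 p)"
    by (simp add: card_ordered_K4 card_K4_sets)
  finally show ?thesis
    using p_gt_2 by simp
qed

lemma card_S_qres_triples: "4 * int k * int (card_S p) = 64 * int (card qres_triples) + 384 * int k ^ 2 - 224 * int k"
  using card_S_cone_card_S card_S_cone sum_clique_weight by (simp add: p_eq)

end

lemma clique_surface_arith:
  fixes n c T j :: int and k :: nat
  assumes "k > 0" and "T = 24 * n" and "4 * int k * c = 64 * T + 384 * int k ^ 2 - 224 * int k"
  shows "(of_int n :: rat) = (of_nat k * (of_nat k - 1) * (of_nat k - 4) + 2 * of_nat k * ((of_int (j ^ 2) - 4) / 32)) / 24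
    \<longleftrightarrow> c = (4 * int k + 2) ^ 2 + j ^ 2"
proof -
  define X where "X = 16 * int k * (int k - 1) * (int k - 4) + int k * (j ^ 2 - 4)"
  have "(of_int n :: rat) = (of_nat k * (of_nat k - 1) * (of_nat k - 4) + 2 * of_nat k * ((of_int (j ^ 2) - 4) / 32)) / 24
      \<longleftrightarrow> (of_int (384 * n) :: rat) = of_int X"
    unfolding X_def by (simp add: field_simps) (rule iffI; linarith)
  also have "\<dots> \<longleftrightarrow> 4 * int k * c = 4 * int k * ((4 * int k + 2) ^ 2 + j ^ 2)"
  proof -
    have "4 * int k * ((4 * int k + 2) ^ 2 + j ^ 2) = 4 * X + 384 * int k ^ 2 - 224 * int k"
      by (simp add: X_def power2_eq_square algebra_simps)
    moreover have "4 * int k * c = 4 * (384 * n) + 384 * int k ^ 2 - 224 * int k"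
      using assms(2,3) by simp
    ultimately show ?thesis
      by (simp only: of_int_eq_iff) linarith
  qed
  also have "\<dots> \<longleftrightarrow> c = (4 * int k + 2) ^ 2 + j ^ 2"
    using assms(1) by simp
  finally show ?thesis .
qed

theorem lemma4p2:
  fixes p k :: nat
  assumes "prime p" and "p = 4 * k + 1"
  shows "(of_nat (n_K4 p) :: rat) =
           (of_nat k * (of_nat k - 1) * (of_nat k - 4) + 2 * of_nat k * d p k) / 24
         \<longleftrightarrow> int (card_S p) = (int p + 1) ^ 2 + J p k ^ 2"
proof -
  have "k > 0"
    using assms by (cases k) auto
  then interpret prime_one_mod_four p k
    using assms by unfold_locales auto
  show ?thesis
    using clique_surface_arith[OF \<open>k > 0\<close> card_qres_triples_K4 card_S_qres_triples, of "J p k"]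
    by (simp add: d_def assms(2) add.commute)
qed

end
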